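(* Assume $h_0x+h_1y>0$ for all $(x,y)\in D$. Let $(x^*,y^* )\in\partial D$ be a minimizer of $\psi$ over $D$ lying on the boundary; such a minimizer exists. Let $A,B\subset[0,1]$ be Borel sets with Lebesgue measures $$|A|=\frac{\mu_+-x^*}{\mu_+-\mu_-},\qquad |B|=\frac{\sigma_+-y^*}{\sigma_+-\sigma_-}.$$ Define $(\mu^*,\sigma^* ):[0,1]\to D$ by - $(\mu^*,\sigma^* )=(\mu_-,\ \sigma_-\chi_B+\sigma_+\chi_{B^c})$ if $x^*=\mu_-$; - $(\mu^*,\sigma^* )=(\mu_+,\ \sigma_-\chi_B+\sigma_+\chi_{B^c})$ if $x^*=\mu_+$; - $(\mu^*,\sigma^* )=(\mu_-\chi_A+\mu_+\chi_{A^c},\ \sigma_-)$ if $y^*=\sigma_-$; - $(\mu^*,\sigma^* )=(\mu_-\chi_A+\mu_+\chi_{A^c},\ \sigma_+)$ if $y^*=\sigma_+$. (At a corner, any applicable case may be used.) Then $(\mu^*,\sigma^* )$ minimizes $$\frac{\Big(\int_0^1\big(h_0\mu(\omega)+h_1\sigma(\omega)\big)d\omega\Big)^2}{\int_0^1\big(\mu^2(\omega)+\sigma^2(\omega)\big)d\omega}$$ over all measurable $(\mu(\cdot),\sigma(\cdot)):[0,1]\to D$.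
   Context: Let $0<\mu_-<\mu_+$ and $0<\sigma_-<\sigma_+$ be real numbers, $D=[\mu_-,\mu_+]\times[\sigma_-,\sigma_+]$, and $h_0,h_1\in\mathbb R$. Write $\mu_M=(\mu_++\mu_-)/2$ and $\sigma_M=(\sigma_++\sigma_-)/2$. For $(x,y)\in D$ let $$\psi(x,y)=\frac{(h_0x+h_1y)^2}{2\mu_Mx+2\sigma_My-\mu_-\mu_+-\sigma_-\sigma_+}.$$ $\chi_A$ denotes the indicator function of $A$, and $A^c=[0,1]\setminus A$. *)

theory Defs
  imports "HOL-Analysis.Analysis"
begin

definition rectD :: "real \<Rightarrow> real \<Rightarrow> real \<Rightarrow> real \<Rightarrow> (real \<times> real) set" where
  "rectD mum mup sgm sgp = {mum..mup} \<times> {sgm..sgp}"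

definition psi :: "real \<Rightarrow> real \<Rightarrow> real \<Rightarrow> real \<Rightarrow> real \<Rightarrow> real \<Rightarrow> real \<Rightarrow> real \<Rightarrow> real" where
  "psi mum mup sgm sgp h0 h1 x y =
     (h0 * x + h1 * y)^2 /
     (2 * ((mup + mum) / 2) * x + 2 * ((sgp + sgm) / 2) * y - mum * mup - sgm * sgp)"

definition ratioF :: "real \<Rightarrow> real \<Rightarrow> (real \<Rightarrow> real) \<Rightarrow> (real \<Rightarrow> real) \<Rightarrow> real" where
  "ratioF h0 h1 mu sg =
     (LINT w:{0..1}|lebesgue. h0 * mu w + h1 * sg w)^2 /
     (LINT w:{0..1}|lebesgue. (mu w)^2 + (sg w)^2)"

definition admissible :: "real \<Rightarrow> real \<Rightarrow> real \<Rightarrow> real \<Rightarrow> (real \<Rightarrow> real) \<Rightarrow> (real \<Rightarrow> real) \<Rightarrow> bool" where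
  "admissible mum mup sgm sgp mu sg \<longleftrightarrow>
     set_borel_measurable lebesgue {0..1} mu \<and> set_borel_measurable lebesgue {0..1} sg \<and>
     (\<forall>w\<in>{0..1}. (mu w, sg w) \<in> rectD mum mup sgm sgp)"

end

theory Submission imports Defs begin

(* Write L(x,y) (the constant chordE below) = ((mu_+ + mu_-) x - mu_- mu_+) + ((sigma_+ + sigma_-) y - sigma_- sigma_+)
   for the denominator of psi.  On [a,b] the parabola x^2 lies below its chord (a+b) x - a b,
   with equality exactly at the end points; hence x^2 + y^2 <= L(x,y) on D, so L > 0 there.

   Moving from a point q of D along the direction orthogonal to
   (h0,h1), oriented so that L does not decrease, keeps the numerator of psi fixed; the ray
   leaves the bounded set D, so it meets the frontier at a point where psi is not larger.
   Hence the minimum of the continuous psi over the compact frontier is a minimum over D.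

   For an admissible control with averages X, Y the numerator of the
   functional is (h0 X + h1 Y)^2 and, integrating the chord inequality, its denominator is
   at most L(X,Y); so the functional is at least psi(X,Y) >= psi(xs,ys).  The bang-bang
   control takes only extreme values, so the chord inequality is an equality for it, and its
   averages are exactly (xs,ys), the prescribed boundary minimizer; it therefore attains psi(xs,ys). *)

section \<open>The chord bound and the denominator of psi\<close>

lemma square_le_chord:
  fixes a b x :: real
  assumes "a \<le> x" "x \<le> b"
  shows "x\<^sup>2 \<le> (a + b) * x - a * b"
proof -
  have "(x - a) * (x - b) \<le> 0" using assms by (simp add: mult_nonneg_nonpos)
  then show ?thesis by (simp add: algebra_simps power2_eq_square)
qed

lemma square_eq_chord:
  fixes a b x :: real
  assumes "x \<in> {a, b}"
  shows "x\<^sup>2 = (a + b) * x - a * b"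
  using assms by (auto simp: algebra_simps power2_eq_square)

text \<open>The chord of x^2 + y^2 over the rectangle: the denominator of psi.\<close>

definition chordE :: "real \<Rightarrow> real \<Rightarrow> real \<Rightarrow> real \<Rightarrow> real \<Rightarrow> real \<Rightarrow> real" where
  "chordE mum mup sgm sgp x y = ((mum + mup) * x - mum * mup) + ((sgm + sgp) * y - sgm * sgp)"

lemma psi_chordE:
  "psi mum mup sgm sgp h0 h1 x y = (h0 * x + h1 * y)\<^sup>2 / chordE mum mup sgm sgp x y"
proof -
  have "2 * ((mup + mum) / 2) * x + 2 * ((sgp + sgm) / 2) * y - mum * mup - sgm * sgp
        = chordE mum mup sgm sgp x y"
    unfolding chordE_def by (simp add: field_simps)
  then show ?thesis unfolding psi_def by simp
qed

lemma chordE_affine: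
  "chordE mum mup sgm sgp (x + u) (y + v) =
     chordE mum mup sgm sgp x y + ((mum + mup) * u + (sgm + sgp) * v)"
  unfolding chordE_def by (simp add: algebra_simps)

text \<open>The denominator of psi is positive on D, since it dominates x^2 + y^2 there.\<close>

lemma chordE_pos:
  assumes "0 < mum" "(x, y) \<in> rectD mum mup sgm sgp"
  shows "0 < chordE mum mup sgm sgp x y"
proof -
  have x: "mum \<le> x" "x \<le> mup" and y: "sgm \<le> y" "y \<le> sgp"
    using assms(2) by (auto simp: rectD_def)
  have "0 < x\<^sup>2 + y\<^sup>2" using x assms(1) by (simp add: add_pos_nonneg)
  also have "\<dots> \<le> chordE mum mup sgm sgp x y"
    unfolding chordE_def by (intro add_mono square_le_chord x y)
  finally show ?thesis .
qed

section \<open>A minimizer of psi on the frontier\<close>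

lemma ray_meets_frontier:
  fixes p d :: "'a::real_normed_vector"
  assumes "p \<in> S" "bounded S" "d \<noteq> 0"
  obtains t where "0 \<le> t" "p + t *\<^sub>R d \<in> frontier S"
proof -
  let ?R = "(\<lambda>t. p + t *\<^sub>R d) ` {0..}"
  have conn: "connected ?R"
    by (intro connected_continuous_image continuous_intros) (simp add: is_interval_connected is_interval_ci)
  have inside: "?R \<inter> S \<noteq> {}" using assms(1) by (auto intro!: image_eqI[where x=0])
  obtain r where r: "\<forall>x\<in>S. norm x \<le> r" using assms(2) by (auto simp: bounded_iff)
  define t where "t = (\<bar>r\<bar> + norm p + 1) / norm d"
  have nd: "0 < norm d" using assms(3) by simp
  have "norm (t *\<^sub>R d) = \<bar>r\<bar> + norm p + 1" unfolding t_def using nd by simp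
  moreover have "norm (t *\<^sub>R d) \<le> norm (p + t *\<^sub>R d) + norm p"
    using norm_triangle_ineq4[of "p + t *\<^sub>R d" p] by simp
  ultimately have "p + t *\<^sub>R d \<notin> S" using r by force
  moreover have "0 \<le> t" unfolding t_def using nd by simp
  ultimately have "?R - S \<noteq> {}" by auto
  with connected_Int_frontier[OF conn inside] show ?thesis using that by auto
qed

text \<open>Every value of psi on D is matched or undercut on the frontier: move along the level
  line of the numerator in the direction in which the denominator does not decrease.\<close>

lemma psi_descends_to_frontier:
  assumes "0 < mum" "h0 \<noteq> 0 \<or> h1 \<noteq> 0" and q: "(x, y) \<in> rectD mum mup sgm sgp"
  shows "\<exists>z \<in> frontier (rectD mum mup sgm sgp).
           psi mum mup sgm sgp h0 h1 (fst z) (snd z) \<le> psi mum mup sgm sgp h0 h1 x y"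
proof -
  define D where "D = rectD mum mup sgm sgp"
  define s :: real where "s = (if (mum + mup) * h1 - (sgm + sgp) * h0 \<ge> 0 then 1 else -1)"
  have grow: "0 \<le> s * ((mum + mup) * h1 - (sgm + sgp) * h0)" unfolding s_def by auto
  have "(s * h1, - s * h0) \<noteq> 0" using assms(2) by (auto simp: s_def zero_prod_def)
  moreover have "bounded D" unfolding D_def rectD_def by (intro bounded_Times bounded_closed_interval)
  ultimately obtain t where t: "0 \<le> t" "(x, y) + t *\<^sub>R (s * h1, - s * h0) \<in> frontier D"
    using ray_meets_frontier q unfolding D_def by metis
  define x' y' where "x' = x + t * s * h1" and "y' = y - t * s * h0"
  have z: "(x', y') \<in> frontier D" using t(2) by (simp add: x'_def y'_def mult.assoc)
  have num: "h0 * x' + h1 * y' = h0 * x + h1 * y" unfolding x'_def y'_def by (simp add: algebra_simps)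
  have "chordE mum mup sgm sgp x' y' =
          chordE mum mup sgm sgp x y + t * (s * ((mum + mup) * h1 - (sgm + sgp) * h0))"
    unfolding x'_def y'_def diff_conv_add_uminus chordE_affine by (simp add: algebra_simps)
  then have "chordE mum mup sgm sgp x y \<le> chordE mum mup sgm sgp x' y'"
    using t(1) grow by simp
  then have "psi mum mup sgm sgp h0 h1 x' y' \<le> psi mum mup sgm sgp h0 h1 x y"
    unfolding psi_chordE num using chordE_pos[OF assms(1) q] by (intro divide_left_mono) auto
  with z show ?thesis unfolding D_def by force
qed

lemma psi_frontier_minimizer:
  assumes "0 < mum" "mum \<le> mup" "sgm \<le> sgp" "h0 \<noteq> 0 \<or> h1 \<noteq> 0"
  shows "\<exists>p \<in> frontier (rectD mum mup sgm sgp). \<forall>q \<in> rectD mum mup sgm sgp.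
           psi mum mup sgm sgp h0 h1 (fst p) (snd p) \<le> psi mum mup sgm sgp h0 h1 (fst q) (snd q)"
proof -
  define D where "D = rectD mum mup sgm sgp"
  let ?f = "\<lambda>p. psi mum mup sgm sgp h0 h1 (fst p) (snd p)"
  have "compact D" unfolding D_def rectD_def by (intro compact_Times compact_Icc)
  then have frD: "frontier D \<subseteq> D" by (simp add: compact_imp_closed frontier_subset_closed)
  have "(mum, sgm) \<in> D - interior D"
    using assms(2,3) unfolding D_def rectD_def interior_Times by auto
  then have nonempty: "frontier D \<noteq> {}"
    using \<open>compact D\<close> by (auto simp: frontier_def compact_imp_closed closure_closed)
  have "chordE mum mup sgm sgp (fst z) (snd z) \<noteq> 0" if "z \<in> frontier D" for z
    using chordE_pos[OF assms(1), of "fst z" "snd z" mup sgm sgp] frD that unfolding D_def by auto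
  then have "continuous_on (frontier D) ?f"
    unfolding psi_chordE chordE_def by (intro continuous_intros) auto
  then obtain p where p: "p \<in> frontier D" "\<forall>z\<in>frontier D. ?f p \<le> ?f z"
    using continuous_attains_inf[OF compact_frontier[OF \<open>compact D\<close>] nonempty] by blast
  have "?f p \<le> ?f q" if "q \<in> D" for q
    using psi_descends_to_frontier[OF assms(1,4), of "fst q" "snd q"] that p(2)
    unfolding D_def by fastforce
  with p(1) show ?thesis unfolding D_def by blast
qed

section \<open>Averages of bounded controls\<close>

definition avg :: "(real \<Rightarrow> real) \<Rightarrow> real" where
  "avg f = (LINT w:{0..1}|lebesgue. f w)"

lemma set_integrable_bounded:
  fixes f :: "'a \<Rightarrow> real"
  assumes "set_borel_measurable M S f" "S \<in> sets M" "emeasure M S < \<infinity>" "\<forall>w\<in>S. \<bar>f w\<bar> \<le> C"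
  shows "set_integrable M S f"
  unfolding set_integrable_def
  by (rule integrableI_bounded_set[OF assms(2) _ assms(3), where B=C])
     (use assms(1,4) in \<open>auto simp: set_borel_measurable_def indicator_def\<close>)

lemma set_borel_measurable_square:
  fixes f :: "'a \<Rightarrow> real"
  assumes "set_borel_measurable M S f"
  shows "set_borel_measurable M S (\<lambda>w. (f w)\<^sup>2)"
proof -
  have "(\<lambda>w. indicator S w *\<^sub>R (f w)\<^sup>2) = (\<lambda>w. (indicator S w *\<^sub>R f w)\<^sup>2)"
    by (auto simp: indicator_def fun_eq_iff)
  then show ?thesis using assms unfolding set_borel_measurable_def by simp
qed

lemma set_integrable_const_unit: "set_integrable lebesgue {0..1::real} (\<lambda>_. c::real)"
  by (rule set_integrable_bounded[where C="\<bar>c\<bar>"])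
     (auto simp: set_borel_measurable_def intro!: borel_measurable_times borel_measurable_indicator)

lemma avg_const [simp]: "avg (\<lambda>_. c) = c"
  unfolding avg_def by (subst set_integral_const) auto

lemma avg_bounds:
  assumes "set_integrable lebesgue {0..1} f" "\<forall>w\<in>{0..1}. a \<le> f w \<and> f w \<le> b"
  shows "a \<le> avg f" "avg f \<le> b"
proof -
  note const = set_integrable_const_unit
  show "a \<le> avg f" using set_integral_mono[OF const assms(1), of a] assms(2) avg_const[of a]
    unfolding avg_def by auto
  show "avg f \<le> b" using set_integral_mono[OF assms(1) const, of b] assms(2) avg_const[of b]
    unfolding avg_def by auto
qed

lemma set_integrable_affine:
  fixes f g :: "real \<Rightarrow> real"
  assumes "set_integrable lebesgue {0..1} f" "set_integrable lebesgue {0..1} g"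
  shows "set_integrable lebesgue {0..1} (\<lambda>w. a * f w + b * g w + c)"
  by (intro set_integral_add(1) set_integrable_mult_right assms set_integrable_const_unit)

lemma avg_affine:
  fixes f g :: "real \<Rightarrow> real"
  assumes "set_integrable lebesgue {0..1} f" "set_integrable lebesgue {0..1} g"
  shows "avg (\<lambda>w. a * f w + b * g w + c) = a * avg f + b * avg g + c"
  unfolding avg_def using assms set_integrable_const_unit[of c]
  by (simp add: set_integral_add set_integrable_mult_right set_integral_mult_right
      flip: avg_def[of "\<lambda>_. c"])

lemma avg_indicator:
  assumes "A \<in> sets borel" "A \<subseteq> {0..1}"
  shows "avg (indicator A) = measure lborel A"
proof -
  have "(\<lambda>w. indicator {0..1} w *\<^sub>R indicator A w) = (indicator A :: real \<Rightarrow> real)"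
    using assms(2) by (auto simp: fun_eq_iff indicator_def)
  then have "avg (indicator A) = measure lebesgue A"
    unfolding avg_def set_lebesgue_integral_def by simp
  also have "\<dots> = measure lborel A" using assms(1) by simp
  finally show ?thesis .
qed

section \<open>Admissible controls\<close>

lemma admissible_integrable:
  assumes adm: "admissible mum mup sgm sgp mu sg" and "0 < mum" "0 < sgm"
  shows "set_integrable lebesgue {0..1} mu" "set_integrable lebesgue {0..1} sg"
    "set_integrable lebesgue {0..1} (\<lambda>w. (mu w)\<^sup>2 + (sg w)\<^sup>2)"
proof -
  have mu: "set_borel_measurable lebesgue {0..1} mu" and sg: "set_borel_measurable lebesgue {0..1} sg"
    and rng: "\<And>w. w \<in> {0..1} \<Longrightarrow> mum \<le> mu w \<and> mu w \<le> mup \<and> sgm \<le> sg w \<and> sg w \<le> sgp"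
    using adm unfolding admissible_def rectD_def by auto
  have fin: "emeasure lebesgue {0..1::real} < \<infinity>" by simp
  have bound: "\<bar>mu w\<bar> \<le> mup" "\<bar>sg w\<bar> \<le> sgp" "\<bar>(mu w)\<^sup>2\<bar> \<le> mup\<^sup>2" "\<bar>(sg w)\<^sup>2\<bar> \<le> sgp\<^sup>2"
    if "w \<in> {0..1}" for w
    using rng[OF that] assms(2,3) by (auto intro: power_mono)
  show "set_integrable lebesgue {0..1} mu" "set_integrable lebesgue {0..1} sg"
    using bound
    by (auto intro!: set_integrable_bounded[OF mu _ fin, where C=mup] set_integrable_bounded[OF sg _ fin, where C=sgp])
  show "set_integrable lebesgue {0..1} (\<lambda>w. (mu w)\<^sup>2 + (sg w)\<^sup>2)"
    using bound
    by (intro set_integral_add(1)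
        set_integrable_bounded[OF set_borel_measurable_square[OF mu] _ fin, where C="mup\<^sup>2"]
        set_integrable_bounded[OF set_borel_measurable_square[OF sg] _ fin, where C="sgp\<^sup>2"]) auto
qed

lemma admissible_avg_in_rect:
  assumes adm: "admissible mum mup sgm sgp mu sg" and "0 < mum" "0 < sgm"
  shows "(avg mu, avg sg) \<in> rectD mum mup sgm sgp"
  using avg_bounds[OF admissible_integrable(1)[OF assms], of mum mup]
    avg_bounds[OF admissible_integrable(2)[OF assms], of sgm sgp] adm
  by (auto simp: admissible_def rectD_def)

text \<open>Integrating the chord inequality: the energy of an admissible control is at most the
  denominator of psi at its averages, with equality for controls taking extreme values only.\<close>

lemma admissible_energy:
  assumes adm: "admissible mum mup sgm sgp mu sg" and "0 < mum" "0 < sgm"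
  defines "J \<equiv> LINT w:{0..1}|lebesgue. (mu w)\<^sup>2 + (sg w)\<^sup>2"
  shows "0 < J" "J \<le> chordE mum mup sgm sgp (avg mu) (avg sg)"
    "\<forall>w\<in>{0..1}. mu w \<in> {mum, mup} \<and> sg w \<in> {sgm, sgp} \<Longrightarrow>
       J = chordE mum mup sgm sgp (avg mu) (avg sg)"
proof -
  note int = admissible_integrable[OF assms(1-3)]
  have rng: "\<And>w. w \<in> {0..1} \<Longrightarrow> mum \<le> mu w \<and> mu w \<le> mup \<and> sgm \<le> sg w \<and> sg w \<le> sgp"
    using adm unfolding admissible_def rectD_def by auto
  define c where "c w = (mum + mup) * mu w + (sgm + sgp) * sg w + (- (mum * mup) - sgm * sgp)" for w
  have c_chord: "c w = chordE mum mup sgm sgp (mu w) (sg w)" for w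
    unfolding c_def chordE_def by simp
  have c_int: "set_integrable lebesgue {0..1} c"
    unfolding c_def by (rule set_integrable_affine[OF int(1,2)])
  have c_avg: "(LINT w:{0..1}|lebesgue. c w) = chordE mum mup sgm sgp (avg mu) (avg sg)"
    using avg_affine[OF int(1,2)] unfolding c_def avg_def chordE_def by simp
  have "(LINT w:{0..1::real}|lebesgue. mum\<^sup>2) \<le> J"
    unfolding J_def
  proof (rule set_integral_mono[OF set_integrable_const_unit int(3)])
    fix w :: real assume "w \<in> {0..1}"
    then have "mum\<^sup>2 \<le> (mu w)\<^sup>2" using rng assms(2) by (intro power_mono) auto
    then show "mum\<^sup>2 \<le> (mu w)\<^sup>2 + (sg w)\<^sup>2" by (simp add: add_increasing2)
  qed
  then have "mum\<^sup>2 \<le> J" using avg_const[of "mum\<^sup>2"] unfolding avg_def by simp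
  moreover have "0 < mum\<^sup>2" using assms(2) by simp
  ultimately show "0 < J" by linarith
  have "J \<le> (LINT w:{0..1}|lebesgue. c w)"
    unfolding J_def
  proof (rule set_integral_mono[OF int(3) c_int])
    fix w :: real assume "w \<in> {0..1}"
    then show "(mu w)\<^sup>2 + (sg w)\<^sup>2 \<le> c w"
      unfolding c_chord chordE_def using rng by (intro add_mono square_le_chord) auto
  qed
  with c_avg show "J \<le> chordE mum mup sgm sgp (avg mu) (avg sg)" by simp
  assume extreme: "\<forall>w\<in>{0..1}. mu w \<in> {mum, mup} \<and> sg w \<in> {sgm, sgp}"
  have "J = (LINT w:{0..1}|lebesgue. c w)"
    unfolding J_def
  proof (rule set_lebesgue_integral_cong, simp, intro allI impI)
    fix w :: real assume "w \<in> {0..1}"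
    then have "(mu w)\<^sup>2 = (mum + mup) * mu w - mum * mup" "(sg w)\<^sup>2 = (sgm + sgp) * sg w - sgm * sgp"
      using extreme by (simp_all add: square_eq_chord)
    then show "(mu w)\<^sup>2 + (sg w)\<^sup>2 = c w" unfolding c_def by simp
  qed
  with c_avg show "J = chordE mum mup sgm sgp (avg mu) (avg sg)" by simp
qed

lemma ratioF_vs_psi_avg:
  assumes adm: "admissible mum mup sgm sgp mu sg" and "0 < mum" "0 < sgm"
  shows "psi mum mup sgm sgp h0 h1 (avg mu) (avg sg) \<le> ratioF h0 h1 mu sg"
    "\<forall>w\<in>{0..1}. mu w \<in> {mum, mup} \<and> sg w \<in> {sgm, sgp} \<Longrightarrow>
       ratioF h0 h1 mu sg = psi mum mup sgm sgp h0 h1 (avg mu) (avg sg)"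
proof -
  note int = admissible_integrable[OF assms]
  note J = admissible_energy[OF assms]
  have num: "(LINT w:{0..1}|lebesgue. h0 * mu w + h1 * sg w) = h0 * avg mu + h1 * avg sg"
    using avg_affine[OF int(1,2), of h0 h1 0] unfolding avg_def by simp
  show "psi mum mup sgm sgp h0 h1 (avg mu) (avg sg) \<le> ratioF h0 h1 mu sg"
    unfolding ratioF_def num psi_chordE using J(1,2) by (intro divide_left_mono) auto
  show "ratioF h0 h1 mu sg = psi mum mup sgm sgp h0 h1 (avg mu) (avg sg)"
    if "\<forall>w\<in>{0..1}. mu w \<in> {mum, mup} \<and> sg w \<in> {sgm, sgp}"
    unfolding ratioF_def num psi_chordE J(3)[OF that] ..
qed

section \<open>Bang-bang controls\<close>

lemma two_valued_control:
  fixes f :: "real \<Rightarrow> real"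
  assumes f: "\<forall>w\<in>{0..1}. f w = (if w \<in> A then a else b)" and A: "A \<in> sets borel" "A \<subseteq> {0..1}"
  shows "set_borel_measurable lebesgue {0..1} f" "avg f = b - (b - a) * measure lborel A"
proof -
  have "A \<in> sets lebesgue" using A(1) by simp
  then have ind: "set_borel_measurable lebesgue {0..1} (indicator A :: real \<Rightarrow> real)"
    by (auto simp: set_borel_measurable_def intro!: borel_measurable_times borel_measurable_indicator)
  have "(\<lambda>w. indicator {0..1} w *\<^sub>R f w) = (\<lambda>w. indicator {0..1} w * ((a - b) * indicator A w + b))"
    using f A(2) by (auto simp: fun_eq_iff indicator_def)
  then show "set_borel_measurable lebesgue {0..1} f"
    unfolding set_borel_measurable_def using \<open>A \<in> sets lebesgue\<close>
    by (simp add: borel_measurable_times borel_measurable_add borel_measurable_indicator)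
  have ind_int: "set_integrable lebesgue {0..1} (indicator A :: real \<Rightarrow> real)"
    by (rule set_integrable_bounded[OF ind, where C=1]) (auto split: split_indicator)
  (* f agrees on [0,1] with (a - b) 1_A + b, written in the shape of avg_affine *)
  have "avg f = avg (\<lambda>w. (a - b) * indicator A w + 0 * indicator A w + b)"
    unfolding avg_def using f by (intro set_lebesgue_integral_cong) (auto simp: indicator_def)
  also have "\<dots> = (a - b) * measure lborel A + b"
    using avg_affine[OF ind_int ind_int, of "a - b" 0 b] avg_indicator[OF A] by simp
  finally show "avg f = b - (b - a) * measure lborel A" by (simp add: algebra_simps)
qed

lemma extremal_control:
  fixes A B :: "real set" and mus sgs :: "real \<Rightarrow> real"
  assumes "mum < mup" "sgm < sgp"
    and A: "A \<in> sets borel" "A \<subseteq> {0..1}" and B: "B \<in> sets borel" "B \<subseteq> {0..1}"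
    and mA: "measure lborel A = (mup - xs) / (mup - mum)"
    and mB: "measure lborel B = (sgp - ys) / (sgp - sgm)"
    and cases: "(xs = mum \<and> (\<forall>w\<in>{0..1}. mus w = mum \<and> sgs w = (if w \<in> B then sgm else sgp))) \<or>
         (xs = mup \<and> (\<forall>w\<in>{0..1}. mus w = mup \<and> sgs w = (if w \<in> B then sgm else sgp))) \<or>
         (ys = sgm \<and> (\<forall>w\<in>{0..1}. mus w = (if w \<in> A then mum else mup) \<and> sgs w = sgm)) \<or>
         (ys = sgp \<and> (\<forall>w\<in>{0..1}. mus w = (if w \<in> A then mum else mup) \<and> sgs w = sgp))"
  shows "admissible mum mup sgm sgp mus sgs" "avg mus = xs" "avg sgs = ys"
    "\<forall>w\<in>{0..1}. mus w \<in> {mum, mup} \<and> sgs w \<in> {sgm, sgp}"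
proof -
  have switch_A: "set_borel_measurable lebesgue {0..1} f \<and> avg f = xs"
    if "\<forall>w\<in>{0..1}. f w = (if w \<in> A then mum else mup)" for f
  proof -
    have "(mup - mum) * measure lborel A = mup - xs" using mA assms(1) by simp
    then show ?thesis using two_valued_control[OF that A] by simp
  qed
  have switch_B: "set_borel_measurable lebesgue {0..1} f \<and> avg f = ys"
    if "\<forall>w\<in>{0..1}. f w = (if w \<in> B then sgm else sgp)" for f
  proof -
    have "(sgp - sgm) * measure lborel B = sgp - ys" using mB assms(2) by simp
    then show ?thesis using two_valued_control[OF that B] by simp
  qed
  have constant_control: "set_borel_measurable lebesgue {0..1} f \<and> avg f = c"
    if "\<forall>w\<in>{0..1}. f w = c" for f c
    using two_valued_control[of f "{}" c c] that by simp
  have "set_borel_measurable lebesgue {0..1} mus \<and> set_borel_measurable lebesgue {0..1} sgs \<and>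
      avg mus = xs \<and> avg sgs = ys \<and> (\<forall>w\<in>{0..1}. mus w \<in> {mum, mup} \<and> sgs w \<in> {sgm, sgp})"
    using cases
  proof (elim disjE conjE)
    assume "xs = mum" "\<forall>w\<in>{0..1}. mus w = mum \<and> sgs w = (if w \<in> B then sgm else sgp)"
    then show ?thesis using constant_control[of mus mum] switch_B[of sgs] by auto
  next
    assume "xs = mup" "\<forall>w\<in>{0..1}. mus w = mup \<and> sgs w = (if w \<in> B then sgm else sgp)"
    then show ?thesis using constant_control[of mus mup] switch_B[of sgs] by auto
  next
    assume "ys = sgm" "\<forall>w\<in>{0..1}. mus w = (if w \<in> A then mum else mup) \<and> sgs w = sgm"
    then show ?thesis using constant_control[of sgs sgm] switch_A[of mus] by auto
  next
    assume "ys = sgp" "\<forall>w\<in>{0..1}. mus w = (if w \<in> A then mum else mup) \<and> sgs w = sgp"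
    then show ?thesis using constant_control[of sgs sgp] switch_A[of mus] by auto
  qed
  then show "admissible mum mup sgm sgp mus sgs" "avg mus = xs" "avg sgs = ys"
    "\<forall>w\<in>{0..1}. mus w \<in> {mum, mup} \<and> sgs w \<in> {sgm, sgp}"
    using assms(1,2) by (auto simp: admissible_def rectD_def)
qed

theorem mainTheorem7:
  fixes mum mup sgm sgp h0 h1 :: real
  assumes "0 < mum" "mum < mup" "0 < sgm" "sgm < sgp"
    and pos: "\<forall>(x, y) \<in> rectD mum mup sgm sgp. h0 * x + h1 * y > 0"
  shows "(\<exists>p \<in> frontier (rectD mum mup sgm sgp).
            \<forall>q \<in> rectD mum mup sgm sgp.
              psi mum mup sgm sgp h0 h1 (fst p) (snd p) \<le> psi mum mup sgm sgp h0 h1 (fst q) (snd q))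
    \<and> (\<forall>xs ys A B (mus :: real \<Rightarrow> real) (sgs :: real \<Rightarrow> real).
        (xs, ys) \<in> frontier (rectD mum mup sgm sgp) \<longrightarrow>
        (\<forall>q \<in> rectD mum mup sgm sgp.
           psi mum mup sgm sgp h0 h1 xs ys \<le> psi mum mup sgm sgp h0 h1 (fst q) (snd q)) \<longrightarrow>
        A \<in> sets borel \<longrightarrow> A \<subseteq> {0..1} \<longrightarrow>
        B \<in> sets borel \<longrightarrow> B \<subseteq> {0..1} \<longrightarrow>
        measure lborel A = (mup - xs) / (mup - mum) \<longrightarrow>
        measure lborel B = (sgp - ys) / (sgp - sgm) \<longrightarrow>
        ((xs = mum \<and> (\<forall>w\<in>{0..1}. mus w = mum \<and> sgs w = (if w \<in> B then sgm else sgp))) \<or>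
         (xs = mup \<and> (\<forall>w\<in>{0..1}. mus w = mup \<and> sgs w = (if w \<in> B then sgm else sgp))) \<or>
         (ys = sgm \<and> (\<forall>w\<in>{0..1}. mus w = (if w \<in> A then mum else mup) \<and> sgs w = sgm)) \<or>
         (ys = sgp \<and> (\<forall>w\<in>{0..1}. mus w = (if w \<in> A then mum else mup) \<and> sgs w = sgp))) \<longrightarrow>
        admissible mum mup sgm sgp mus sgs \<and>
        (\<forall>mu sg. admissible mum mup sgm sgp mu sg \<longrightarrow> ratioF h0 h1 mus sgs \<le> ratioF h0 h1 mu sg))"
proof (intro conjI allI impI)
  have "(mum, sgm) \<in> rectD mum mup sgm sgp" using assms(1-4) by (simp add: rectD_def)
  then have "h0 \<noteq> 0 \<or> h1 \<noteq> 0" using pos by auto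
  then show "\<exists>p \<in> frontier (rectD mum mup sgm sgp). \<forall>q \<in> rectD mum mup sgm sgp.
      psi mum mup sgm sgp h0 h1 (fst p) (snd p) \<le> psi mum mup sgm sgp h0 h1 (fst q) (snd q)"
    using psi_frontier_minimizer assms(1-4) by simp
next
  fix xs ys :: real and A B :: "real set" and mus sgs :: "real \<Rightarrow> real"
  assume min: "\<forall>q \<in> rectD mum mup sgm sgp.
      psi mum mup sgm sgp h0 h1 xs ys \<le> psi mum mup sgm sgp h0 h1 (fst q) (snd q)"
  assume "A \<in> sets borel" "A \<subseteq> {0..1}" "B \<in> sets borel" "B \<subseteq> {0..1}"
    "measure lborel A = (mup - xs) / (mup - mum)" "measure lborel B = (sgp - ys) / (sgp - sgm)"
    "(xs = mum \<and> (\<forall>w\<in>{0..1}. mus w = mum \<and> sgs w = (if w \<in> B then sgm else sgp))) \<or>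
     (xs = mup \<and> (\<forall>w\<in>{0..1}. mus w = mup \<and> sgs w = (if w \<in> B then sgm else sgp))) \<or>
     (ys = sgm \<and> (\<forall>w\<in>{0..1}. mus w = (if w \<in> A then mum else mup) \<and> sgs w = sgm)) \<or>
     (ys = sgp \<and> (\<forall>w\<in>{0..1}. mus w = (if w \<in> A then mum else mup) \<and> sgs w = sgp))"
  (* only minimality of (xs, ys) over D is needed, not its position on the frontier *)
  note star = extremal_control[OF assms(2,4) this]
  show "admissible mum mup sgm sgp mus sgs" by (rule star(1))
  fix mu sg assume adm: "admissible mum mup sgm sgp mu sg"
  have "ratioF h0 h1 mus sgs = psi mum mup sgm sgp h0 h1 xs ys"
    using ratioF_vs_psi_avg(2)[OF star(1) assms(1,3) star(4)] star(2,3) by simp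
  also have "\<dots> \<le> psi mum mup sgm sgp h0 h1 (avg mu) (avg sg)"
    using min admissible_avg_in_rect[OF adm assms(1,3)] by force
  also have "\<dots> \<le> ratioF h0 h1 mu sg" by (rule ratioF_vs_psi_avg(1)[OF adm assms(1,3)])
  finally show "ratioF h0 h1 mus sgs \<le> ratioF h0 h1 mu sg" .
qed

end
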